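(* Let $a$ and $b$ be positive integers and let $d$ be the largest practical number dividing $\gcd(a,b)$. Consider the numbers $an+b$ with $n$ ranging over the nonnegative integers. Then: (a) If there exists a prime $p\le \sigma(d)+1$ such that $p\nmid \frac{a}{d}$, then there are infinitely many practical numbers of the form $an+b$. (b) If $b$ is a practical number and every prime $p\le\sigma(d)+1$ divides $\frac{a}{d}$, then there is exactly one practical number of the form $an+b$ (namely $b$). (c) If $b$ is not a practical number and every prime $p\le\sigma(d)+1$ divides $\frac{a}{d}$, then there are no practical numbers of the form $an+b$.
   Context: A positive integer $N$ is called a practical number if every integer in $[1,N]$ can be expressed as a sum of distinct positive divisors of $N$. $\sigma(N)$ denotes the sum of the positive divisors of $N$. *)

theory Defs
  imports "HOL-Number_Theory.Number_Theory"
begin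

definition divisors_of :: "nat \<Rightarrow> nat set" where
  "divisors_of N = {k. k dvd N \<and> k > 0}"

definition sigma :: "nat \<Rightarrow> nat" where
  "sigma N = (\<Sum>k\<in>divisors_of N. k)"

definition practical :: "nat \<Rightarrow> bool" where
  "practical N \<longleftrightarrow> N > 0 \<and>
     (\<forall>m\<in>{1..N}. \<exists>S. S \<subseteq> divisors_of N \<and> (\<Sum>k\<in>S. k) = m)"

definition largest_practical_dvd :: "nat \<Rightarrow> nat" where
  "largest_practical_dvd n = (GREATEST d. practical d \<and> d dvd n)"

end

theory Submission
  imports Defs
begin

text \<open>Multiplying a practical number x by any q \<le> \<sigma>(x) + 1 keeps it practical: write
  k = q u + v with u \<le> x and v < q, take q times a representation of u plus a representation
  of v by divisors of x, none of which is divisible by q.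

  (a) Starting from the practical d, the numbers d p^e s with p^e \<equiv> 1 (mod a/d) and
  s \<le> a/d, s \<equiv> b/d (mod a/d) are practical, arbitrarily large and \<equiv> b (mod a).

  (b), (c) Let m = a n + b be practical with n > 0. Then d is a proper divisor of m; at the least
  prime r where m has a higher multiplicity than d, all divisors of m below r divide d, and as
  r - 1 is a sum of them, r \<le> \<sigma>(d) + 1. Hence r divides a/d, and maximality of d forces d
  and gcd(a, b) to have the same multiplicity k at r. But then r^(k+1) divides a and m,
  hence b, hence gcd(a, b): a contradiction.\<close>

lemma practical_pos: "practical x \<Longrightarrow> x > 0"
  unfolding practical_def by simp

lemma finite_divisors_of: "x > 0 \<Longrightarrow> finite (divisors_of x)"
  unfolding divisors_of_def by (rule finite_subset[of _ "{..x}"]) (auto dest: dvd_imp_le)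

lemma sigma_mono: "x dvd y \<Longrightarrow> y > 0 \<Longrightarrow> sigma x \<le> sigma y"
  unfolding sigma_def divisors_of_def
  by (intro sum_mono2 finite_divisors_of[unfolded divisors_of_def]) (auto intro: dvd_trans)

lemma le_sigma: "x > 0 \<Longrightarrow> x \<le> sigma x"
  unfolding sigma_def
  by (intro member_le_sum finite_divisors_of) (auto simp: divisors_of_def)

lemma subset_sums_complete:
  fixes A :: "nat set"
  assumes "finite A" and "\<forall>a\<in>A. a \<le> 1 + \<Sum>{b\<in>A. b < a}" and "k \<le> \<Sum>A"
  shows "\<exists>S\<subseteq>A. \<Sum>S = k"
  using assms
proof (induction A arbitrary: k rule: finite_linorder_max_induct)
  case empty
  then show ?case by auto
next
  case (insert c A)
  have "{b\<in>insert c A. b < a} = {b\<in>A. b < a}" if "a \<in> A" for a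
    using insert.hyps(2) that by auto
  then have IH: "\<exists>S\<subseteq>A. \<Sum>S = j" if "j \<le> \<Sum>A" for j
    using insert.IH insert.prems(1) that by auto
  have "{b\<in>insert c A. b < c} = A"
    using insert.hyps(2) by auto
  then have c_le: "c \<le> 1 + \<Sum>A"
    using insert.prems(1) by auto
  have c_notin: "c \<notin> A"
    using insert.hyps(2) by auto
  show ?case
  proof (cases "k \<le> \<Sum>A")
    case True
    then show ?thesis using IH by blast
  next
    case False
    moreover have "k \<le> c + \<Sum>A"
      using insert.prems(2) insert.hyps(1) c_notin by simp
    ultimately have "k - c \<le> \<Sum>A"
      by linarith
    then obtain S where S: "S \<subseteq> A" "\<Sum>S = k - c"
      using IH by blast
    have "c \<le> k"
      using False c_le by linarith
    moreover have "c \<notin> S"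
      using S(1) c_notin by blast
    moreover have "finite S"
      using S(1) insert.hyps(1) by (rule finite_subset)
    ultimately have "\<Sum>(insert c S) = k"
      using S(2) by simp
    with S(1) show ?thesis by blast
  qed
qed

lemma practical_subset_sum:
  assumes "practical x" and "k \<le> sigma x"
  shows "\<exists>S\<subseteq>divisors_of x. \<Sum>S = k"
proof (rule subset_sums_complete)
  have x_pos: "x > 0"
    using assms(1) by (rule practical_pos)
  then show fin: "finite (divisors_of x)"
    by (rule finite_divisors_of)
  show "k \<le> \<Sum>(divisors_of x)"
    using assms(2) by (simp add: sigma_def)
  show "\<forall>a\<in>divisors_of x. a \<le> 1 + \<Sum>{b\<in>divisors_of x. b < a}"
  proof
    fix a assume a: "a \<in> divisors_of x"
    show "a \<le> 1 + \<Sum>{b\<in>divisors_of x. b < a}"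
    proof (cases "a \<le> 1")
      case False
      have "a \<le> x"
        using a x_pos by (auto simp: divisors_of_def dvd_imp_le)
      with False have "a - 1 \<in> {1..x}"
        by auto
      then obtain S where S: "S \<subseteq> divisors_of x" "\<Sum>S = a - 1"
        using assms(1) unfolding practical_def by blast
      have "finite S"
        using S(1) fin by (rule finite_subset)
      then have "t < a" if "t \<in> S" for t
        using member_le_sum[of t S "\<lambda>b. b"] that S(2) False by simp
      then have "S \<subseteq> {b\<in>divisors_of x. b < a}"
        using S(1) by blast
      then have "\<Sum>S \<le> \<Sum>{b\<in>divisors_of x. b < a}"
        using fin by (intro sum_mono2) auto
      with S(2) show ?thesis by linarith
    qed simp
  qed
qed

lemma practical_mult:
  assumes px: "practical x" and q_pos: "q > 0" and q_le: "q \<le> sigma x + 1"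
  shows "practical (x * q)"
  unfolding practical_def
proof (intro conjI ballI)
  have x_pos: "x > 0"
    using px by (rule practical_pos)
  then show "x * q > 0"
    using q_pos by simp
  have fin: "finite (divisors_of x)"
    using x_pos by (rule finite_divisors_of)
  fix k assume k: "k \<in> {1..x * q}"
  define u v where "u = k div q" and "v = k mod q"
  have k_eq: "k = q * u + v"
    by (simp add: u_def v_def)
  have "u \<le> x"
    using div_le_mono[of k "x * q" q] k q_pos by (simp add: u_def)
  then obtain S1 where S1: "S1 \<subseteq> divisors_of x" "\<Sum>S1 = u"
    using practical_subset_sum[OF px] le_sigma[OF x_pos] by (meson le_trans)
  have "v < q"
    using q_pos by (simp add: v_def)
  with q_le have "v \<le> sigma x"
    by linarith
  then obtain S2 where S2: "S2 \<subseteq> divisors_of x" "\<Sum>S2 = v"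
    using practical_subset_sum[OF px] by blast
  have S2_ndvd: "\<not> q dvd t" if t: "t \<in> S2" for t
  proof (cases "q dvd x")
    case True
    have "t \<le> v"
      using member_le_sum[of t S2 "\<lambda>b. b"] t finite_subset[OF S2(1) fin] S2(2) by simp
    moreover have "t > 0"
      using t S2(1) by (auto simp: divisors_of_def)
    ultimately show ?thesis
      using \<open>v < q\<close> by (meson dvd_imp_le le_less_trans not_le)
  next
    case False
    then show ?thesis
      using t S2(1) by (auto simp: divisors_of_def intro: dvd_trans)
  qed
  define S where "S = (\<lambda>s. q * s) ` S1 \<union> S2"
  have "\<Sum>S = \<Sum>((\<lambda>s. q * s) ` S1) + \<Sum>S2"
    unfolding S_def using S2_ndvd finite_subset[OF S1(1) fin] finite_subset[OF S2(1) fin]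
    by (intro sum.union_disjoint) (auto dest: S2_ndvd)
  also have "\<Sum>((\<lambda>s. q * s) ` S1) = q * u"
    using S1(2) q_pos sum_distrib_left[of q "\<lambda>s. s" S1] by (simp add: sum.reindex inj_on_def)
  finally have "\<Sum>S = k"
    using S2(2) k_eq by simp
  moreover have "S \<subseteq> divisors_of (x * q)"
    using S1(1) S2(1) q_pos unfolding S_def divisors_of_def
    by (auto intro: dvd_mult2 simp: mult.commute[of x q])
  ultimately show "\<exists>S. S \<subseteq> divisors_of (x * q) \<and> \<Sum>S = k"
    by blast
qed

lemma practical_mult_power:
  assumes px: "practical x" and q_pos: "q > 0" and q_le: "q \<le> sigma x + 1"
  shows "practical (x * q ^ e)"
proof (induction e)
  case 0
  show ?case using px by simp
next
  case (Suc e)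
  have "sigma x \<le> sigma (x * q ^ e)"
    using practical_pos[OF Suc.IH] by (intro sigma_mono) auto
  then have "practical (x * q ^ e * q)"
    using practical_mult[OF Suc.IH q_pos] q_le by simp
  then show ?case
    by (simp add: ac_simps)
qed

lemma ex_power_cong_1_ge:
  fixes p n B :: nat
  assumes "coprime p n" and "p > 1" and "n > 0"
  shows "\<exists>e. B \<le> p ^ e \<and> [p ^ e = 1] (mod n)"
proof (intro exI conjI)
  show "[p ^ (totient n * B) = 1] (mod n)"
    using cong_pow[OF euler_theorem[OF assms(1)], of B] by (simp add: power_mult)
  have "B \<le> totient n * B"
    using \<open>n > 0\<close> by (simp add: Suc_le_eq)
  also have "\<dots> < 2 ^ (totient n * B)"
    by (rule less_exp)
  also have "\<dots> \<le> p ^ (totient n * B)"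
    using \<open>p > 1\<close> by (intro power_mono) auto
  finally show "B \<le> p ^ (totient n * B)"
    by simp
qed

lemma infinite_practical_in_progression:
  fixes a b d p :: nat
  assumes a_pos: "a > 0" and pd: "practical d" and "d dvd a" and "d dvd b"
    and p_gt: "p > 1" and p_le: "p \<le> sigma d + 1" and cop: "coprime p (a div d)"
  shows "infinite {m. practical m \<and> (\<exists>n. m = a * n + b)}"
  unfolding infinite_nat_iff_unbounded_le
proof
  fix B
  define a' b' where "a' = a div d" and "b' = b div d"
  have a_eq: "a = d * a'" and b_eq: "b = d * b'"
    using assms by (simp_all add: a'_def b'_def)
  have a'_pos: "a' > 0"
    using a_pos a_eq by simp
  obtain e where e: "B + a' + b \<le> p ^ e" "[p ^ e = 1] (mod a')"
    using ex_power_cong_1_ge[OF cop[folded a'_def] p_gt a'_pos] by blast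
  obtain s where s: "0 < s" "s \<le> a'" "[s = b'] (mod a')"
  proof
    let ?s = "if b' mod a' = 0 then a' else b' mod a'"
    show "0 < ?s" "?s \<le> a'" "[?s = b'] (mod a')"
      using a'_pos by (auto simp: cong_def less_imp_le)
  qed
  define x where "x = d * p ^ e"
  have px: "practical x"
    unfolding x_def using practical_mult_power[OF pd _ p_le] p_gt by simp
  have pe_le: "p ^ e \<le> x"
    using practical_pos[OF pd] by (simp add: x_def)
  then have "s \<le> sigma x + 1"
    using s(2) e(1) le_sigma[OF practical_pos[OF px]] by linarith
  then have pxs: "practical (x * s)"
    using practical_mult[OF px s(1)] by blast
  have "[p ^ e * s = 1 * b'] (mod a')"
    using e(2) s(3) by (rule cong_mult)
  then have "[x * s = b] (mod a)"
    by (simp add: cong_def x_def a_eq b_eq mult.assoc mod_mult_mult1)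
  moreover have "p ^ e \<le> x * s"
    using pe_le s(1) by (simp add: le_trans)
  ultimately obtain n where "x * s = n * a + b"
    using e(1) cong_le_nat[of b "x * s" a] by auto
  then show "\<exists>m\<ge>B. m \<in> {m. practical m \<and> (\<exists>n. m = a * n + b)}"
    using pxs e(1) \<open>p ^ e \<le> x * s\<close> by (intro exI[of _ "x * s"]) (auto simp: mult.commute)
qed

lemma practical_multiple_prime_le_sigma:
  assumes pm: "practical m" and "d dvd m" and "d \<noteq> m"
  shows "\<exists>r. prime r \<and> r \<le> sigma d + 1 \<and> multiplicity r d < multiplicity r m"
proof -
  have m_pos: "m > 0"
    using pm by (rule practical_pos)
  with \<open>d dvd m\<close> have d_pos: "d > 0"
    by (auto intro: Nat.gr0I)
  have "\<exists>p. prime p \<and> multiplicity p d < multiplicity p m"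
  proof (rule ccontr)
    assume "\<not> ?thesis"
    then have "m dvd d"
      using m_pos by (intro multiplicity_le_imp_dvd) (auto simp: not_less)
    with \<open>d dvd m\<close> \<open>d \<noteq> m\<close> show False
      by (simp add: dvd_antisym)
  qed
  define r where "r = (LEAST p. prime p \<and> multiplicity p d < multiplicity p m)"
  have r: "prime r" "multiplicity r d < multiplicity r m"
    using LeastI_ex[OF \<open>\<exists>p. _\<close>] unfolding r_def by auto
  have below_r: "multiplicity p m \<le> multiplicity p d" if "prime p" "p < r" for p
    using not_less_Least[of p "\<lambda>p. prime p \<and> multiplicity p d < multiplicity p m"] that
    unfolding r_def by (auto simp: not_less)
  have small_dvd: "t dvd d" if t: "t dvd m" "t > 0" "t < r" for t
  proof (rule multiplicity_le_imp_dvd)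
    fix p :: nat assume p: "prime p"
    show "multiplicity p t \<le> multiplicity p d"
    proof (cases "p dvd t")
      case True
      then have "p < r"
        using t by (auto dest: dvd_imp_le)
      then have "multiplicity p m \<le> multiplicity p d"
        using below_r p by blast
      moreover have "multiplicity p t \<le> multiplicity p m"
        using t m_pos by (intro dvd_imp_multiplicity_le) auto
      ultimately show ?thesis by simp
    qed (simp add: not_dvd_imp_multiplicity_0)
  qed (use t in simp)
  have "r dvd m"
    using r(2) not_dvd_imp_multiplicity_0[of r m] by auto
  then have "r - 1 \<le> sigma m"
    using le_sigma[OF m_pos] m_pos by (auto dest: dvd_imp_le)
  then obtain S where S: "S \<subseteq> divisors_of m" "\<Sum>S = r - 1"
    using practical_subset_sum[OF pm] by blast
  have "finite S"
    using S(1) finite_divisors_of[OF m_pos] by (rule finite_subset)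
  then have "t < r" if "t \<in> S" for t
    using member_le_sum[of t S "\<lambda>b. b"] that S(2) prime_gt_0_nat[OF r(1)] by simp
  then have "S \<subseteq> divisors_of d"
    using S(1) small_dvd by (auto simp: divisors_of_def)
  then have "\<Sum>S \<le> sigma d"
    unfolding sigma_def using finite_divisors_of[OF d_pos] by (intro sum_mono2) auto
  with S(2) r show ?thesis
    by (intro exI[of _ r]) auto
qed

lemma largest_practical_dvd:
  assumes "n > 0"
  shows "practical (largest_practical_dvd n) \<and> largest_practical_dvd n dvd n"
  unfolding largest_practical_dvd_def
proof (rule GreatestI_nat)
  show "practical 1 \<and> 1 dvd n"
    unfolding practical_def divisors_of_def by (auto intro!: exI[of _ "{1}"])
  show "y \<le> n" if "practical y \<and> y dvd n" for y
    using assms that by (auto dest: dvd_imp_le)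
qed

lemma largest_practical_dvd_greatest:
  assumes "n > 0" and "practical y" and "y dvd n"
  shows "y \<le> largest_practical_dvd n"
  unfolding largest_practical_dvd_def
  using assms by (intro Greatest_le_nat[of _ _ n]) (auto dest: dvd_imp_le)

lemma multiplicity_largest_practical_dvd:
  assumes n_pos: "n > 0" and r: "prime r" and r_le: "r \<le> sigma (largest_practical_dvd n) + 1"
  shows "multiplicity r (largest_practical_dvd n) = multiplicity r n"
proof -
  define d where "d = largest_practical_dvd n"
  have pd: "practical d" and "d dvd n"
    using largest_practical_dvd[OF n_pos] by (simp_all add: d_def)
  then obtain c where n_eq: "n = d * c"
    by blast
  have "\<not> r dvd c"
  proof
    assume "r dvd c"
    then have "d * r dvd n"
      by (simp add: n_eq)
    moreover have "practical (d * r)"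
      using practical_mult[OF pd prime_gt_0_nat[OF r]] r_le by (simp add: d_def)
    ultimately have "d * r \<le> d"
      using largest_practical_dvd_greatest[OF n_pos] by (simp add: d_def)
    with practical_pos[OF pd] prime_gt_1_nat[OF r] show False
      by simp
  qed
  then have "multiplicity r c = 0"
    by (rule not_dvd_imp_multiplicity_0)
  moreover have "c \<noteq> 0"
    using n_pos n_eq by auto
  ultimately have "multiplicity r n = multiplicity r d"
    using r practical_pos[OF pd] by (simp add: n_eq prime_elem_multiplicity_mult_distrib)
  then show ?thesis
    by (simp add: d_def)
qed

lemma practical_in_progression_imp_index_0:
  fixes a b n :: nat
  assumes a_pos: "a > 0" and b_pos: "b > 0"
    and primes_dvd: "\<forall>p. prime p \<and> p \<le> sigma (largest_practical_dvd (gcd a b)) + 1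
                        \<longrightarrow> p dvd a div largest_practical_dvd (gcd a b)"
    and pm: "practical (a * n + b)"
  shows "n = 0"
proof (rule ccontr)
  assume "n \<noteq> 0"
  define g d m where "g = gcd a b" and "d = largest_practical_dvd g" and "m = a * n + b"
  have g_pos: "g > 0"
    using a_pos by (simp add: g_def)
  have "d dvd g"
    using largest_practical_dvd[OF g_pos] by (simp add: d_def)
  then have "d dvd a" "d dvd b"
    by (auto simp: g_def intro: dvd_trans)
  then have "d dvd m"
    by (simp add: m_def)
  have "d \<le> b"
    using \<open>d dvd b\<close> b_pos by (rule dvd_imp_le)
  moreover have "b < m"
    using \<open>n \<noteq> 0\<close> a_pos by (simp add: m_def)
  ultimately have "d \<noteq> m"
    by simp
  then obtain r where r: "prime r" "r \<le> sigma d + 1" "multiplicity r d < multiplicity r m"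
    using practical_multiple_prime_le_sigma[OF pm[folded m_def] \<open>d dvd m\<close>] by blast
  define k where "k = multiplicity r g"
  have k_eq: "multiplicity r d = k"
    using multiplicity_largest_practical_dvd[OF g_pos r(1)] r(2) by (simp add: d_def k_def)
  have "r dvd a div d"
    using primes_dvd r(1,2) by (simp add: d_def g_def)
  moreover have "r ^ k dvd d"
    using k_eq multiplicity_dvd[of r d] by simp
  ultimately have "r ^ k * r dvd d * (a div d)"
    by (rule mult_dvd_mono[rotated])
  then have "r ^ Suc k dvd a"
    using \<open>d dvd a\<close> by (simp add: mult.commute)
  moreover have "r ^ Suc k dvd m"
    using r(3) k_eq by (intro multiplicity_dvd') simp
  ultimately have "r ^ Suc k dvd b"
    by (simp add: m_def dvd_add_right_iff)
  with \<open>r ^ Suc k dvd a\<close> have "r ^ Suc k dvd g"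
    by (simp add: g_def)
  then have "Suc k \<le> k"
    using g_pos prime_gt_1_nat[OF r(1)]
    by (subst (asm) power_dvd_iff_le_multiplicity) (auto simp: k_def)
  then show False
    by simp
qed

theorem theorem2p2:
  fixes a b :: nat
  assumes "a > 0" and "b > 0"
  defines "d \<equiv> largest_practical_dvd (gcd a b)"
  shows "((\<exists>p. prime p \<and> p \<le> sigma d + 1 \<and> \<not> p dvd (a div d))
           \<longrightarrow> infinite {m. practical m \<and> (\<exists>n::nat. m = a * n + b)})
       \<and> ((practical b \<and> (\<forall>p. prime p \<and> p \<le> sigma d + 1 \<longrightarrow> p dvd (a div d)))
           \<longrightarrow> {m. practical m \<and> (\<exists>n::nat. m = a * n + b)} = {b})
       \<and> ((\<not> practical b \<and> (\<forall>p. prime p \<and> p \<le> sigma d + 1 \<longrightarrow> p dvd (a div d)))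
           \<longrightarrow> {m. practical m \<and> (\<exists>n::nat. m = a * n + b)} = {})"
proof (intro conjI impI)
  have "gcd a b > 0"
    using assms(1) by simp
  then have "practical d" "d dvd a" "d dvd b"
    using largest_practical_dvd[of "gcd a b"] by (auto simp: d_def intro: dvd_trans)
  assume "\<exists>p. prime p \<and> p \<le> sigma d + 1 \<and> \<not> p dvd (a div d)"
  then obtain p where p: "prime p" "p \<le> sigma d + 1" "\<not> p dvd (a div d)"
    by blast
  show "infinite {m. practical m \<and> (\<exists>n. m = a * n + b)}"
    using infinite_practical_in_progression[OF assms(1) \<open>practical d\<close> \<open>d dvd a\<close> \<open>d dvd b\<close>
        prime_gt_1_nat[OF p(1)] p(2) prime_imp_coprime[OF p(1,3)]] .
next
  assume "practical b \<and> (\<forall>p. prime p \<and> p \<le> sigma d + 1 \<longrightarrow> p dvd (a div d))"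
  then show "{m. practical m \<and> (\<exists>n. m = a * n + b)} = {b}"
    using practical_in_progression_imp_index_0[OF assms(1,2)] unfolding d_def
    by (auto intro: exI[of _ 0])
next
  assume "\<not> practical b \<and> (\<forall>p. prime p \<and> p \<le> sigma d + 1 \<longrightarrow> p dvd (a div d))"
  then show "{m. practical m \<and> (\<exists>n. m = a * n + b)} = {}"
    using practical_in_progression_imp_index_0[OF assms(1,2)] unfolding d_def by force
qed

end
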